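(* Assume condition (A). Then the limit function $R(\lambda)=\lim_{n\to\infty}R_n(\lambda)$, $\lambda\ge 0$, has the representation $$R(\lambda)=c\lambda-\theta\lambda^2-\int_0^\infty\big(e^{-\lambda u}-1+\lambda u\big)\,\Lambda_1(du),$$ where $c\in\mathbb R$, $\theta\ge0$, and $\Lambda_1$ is a $\sigma$-finite measure on $(0,\infty)$ with $\int_0^\infty(u\wedge u^2)\,\Lambda_1(du)<\infty$.
   Context: For each $n\ge1$, let $\{\xi_n(k,j):k,j\ge1\}$ be a family of i.i.d. random variables with values in $\mathbb N=\{0,1,2,\dots\}$, with generating function $g_n(s)=E[s^{\xi_n(1,1)}]$, $0\le s\le 1$. Let $(b_n)$ be positive numbers with $b_n\to\infty$. For $0\le\lambda\le b_n$ set $R_n(\lambda)=nb_n[(1-\lambda/b_n)-g_n(1-\lambda/b_n)]$. Condition (A): the sequence $(R_n)$ is uniformly Lipschitz on each bounded interval (for $n$ large enough that it is defined there) and converges pointwise to a continuous function as $n\to\infty$. *)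

theory Defs
  imports "HOL-Probability.Probability"
begin

definition gen_fun :: "nat pmf \<Rightarrow> real \<Rightarrow> real" where
  "gen_fun p s = measure_pmf.expectation p (\<lambda>k. s ^ k)"

text \<open>R_n(lambda) = n b_n [(1 - lambda/b_n) - g_n(1 - lambda/b_n)];
  meaningful for 0 <= lambda <= b_n.\<close>
definition Rfun :: "(nat \<Rightarrow> nat pmf) \<Rightarrow> (nat \<Rightarrow> real) \<Rightarrow> nat \<Rightarrow> real \<Rightarrow> real" where
  "Rfun p b n lam = real n * b n * ((1 - lam / b n) - gen_fun (p n) (1 - lam / b n))"

end

theory Submission
  imports Defs
begin

text \<open>
  Write \<open>N_k(y) = (1-y)^k - 1 + k y\<close> and \<open>M(y) = e^{-y} - 1 + y\<close>. If the offspring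
  law of generation \<open>n\<close> has finite mean \<open>m_n\<close>, then
  \<open>R_n(\<lambda>) = n (m_n - 1) \<lambda> - n b_n E[N_\<xi>(\<lambda>/b_n)]\<close>, a linear drift minus a nonnegative term.
  Uniformly in \<open>k\<close>, as \<open>b \<rightarrow> \<infinity>\<close>, \<open>N_k(\<lambda>/b) \<approx> N_k(1/b) G(\<lambda>, v)\<close>, where \<open>u = k/b\<close>,
  \<open>v = u/(1+u)\<close> and \<open>G(\<lambda>, v) = M(\<lambda> u)/M(u)\<close> is bounded and continuous on \<open>[0,1]\<close> once extended by
  \<open>\<lambda>\<^sup>2\<close> at \<open>v = 0\<close> and by \<open>\<lambda>\<close> at \<open>v = 1\<close>. Averaging, \<open>n b_n E[N_\<xi>(\<lambda>/b_n)] \<approx> w_n \<integral> G(\<lambda>,\<cdot>) d\<mu>_n\<close>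
  with the mass \<open>w_n = n b_n E[N_\<xi>(1/b_n)]\<close> and a probability law \<open>\<mu>_n\<close> on \<open>[0,1]\<close> (the mixing law).
  Condition (A) yields finite means and bounded drifts and masses, so along a subsequence they
  converge and \<open>\<mu>_n\<close> converges weakly (Helly): \<open>R(\<lambda>) = c\<^sub>0 \<lambda> - m\<^sub>0 \<integral> G(\<lambda>, v) \<mu>(dv)\<close>. Splitting
  \<open>\<mu>\<close> into its atoms at \<open>0\<close> and \<open>1\<close> and its part on \<open>(0,1)\<close>, transported by \<open>v \<mapsto> v/(1-v)\<close>,
  produces \<open>\<theta>\<close>, a drift correction and the Levy measure \<open>\<Lambda>\<^sub>1\<close>.
\<close>

section \<open>Elementary bounds for the defects of \<open>(1-y)^k\<close> and \<open>e^{-y}\<close>\<close>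

definition pow_defect :: "nat \<Rightarrow> real \<Rightarrow> real" where
  "pow_defect k y = (1-y)^k - 1 + real k * y"

definition exp_defect :: "real \<Rightarrow> real" where
  "exp_defect y = exp (-y) - 1 + y"

lemma pow_defect_Suc: "pow_defect (Suc k) y = (1-y) * pow_defect k y + real k * y^2"
  by (simp add: pow_defect_def algebra_simps power2_eq_square)

lemma pow_defect_nonneg: assumes "0 \<le> y" "y \<le> 1" shows "0 \<le> pow_defect k y"
proof (induction k)
  case (Suc k) then show ?case using assms by (simp add: pow_defect_Suc)
qed (simp add: pow_defect_def)

lemma pow_defect_upper:
  assumes "0 \<le> y" "y \<le> 1" shows "pow_defect k y \<le> real k * (real k - 1) / 2 * y^2"
proof (induction k)
  case (Suc k)
  have "pow_defect (Suc k) y = (1-y) * pow_defect k y + real k * y^2" by (rule pow_defect_Suc)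
  also have "\<dots> \<le> pow_defect k y + real k * y^2"
    using pow_defect_nonneg[OF assms, of k] assms by (simp add: mult_left_le_one_le)
  also have "\<dots> \<le> real k * (real k - 1) / 2 * y^2 + real k * y^2" using Suc by simp
  also have "\<dots> = real (Suc k) * (real (Suc k) - 1) / 2 * y^2" by (simp add: field_simps)
  finally show ?case .
qed (simp add: pow_defect_def)

lemma pow_defect_lower:
  assumes "0 \<le> y" "y \<le> 1"
  shows "real k * (real k - 1) / 2 * y^2 - real k * (real k - 1) * (real k - 2) / 6 * y^3
    \<le> pow_defect k y"
proof (induction k)
  case (Suc k)
  define A where "A = real k * (real k - 1) / 2 * y^2"
  define B where "B = real k * (real k - 1) * (real k - 2) / 6 * y^3"
  have B_nonneg: "0 \<le> B"
  proof (cases "k \<ge> 2")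
    case True then show ?thesis using assms by (auto simp: B_def)
  next
    case False then have "k = 0 \<or> k = 1" by auto
    then show ?thesis by (auto simp: B_def)
  qed
  have "(1-y) * (A - B) \<le> (1-y) * pow_defect k y"
    using Suc assms by (simp add: A_def B_def mult_left_mono)
  moreover have "(1-y)*(A-B) + real k * y^2 = real (Suc k) * (real (Suc k) - 1) / 2 * y^2
      - real (Suc k) * (real (Suc k) - 1) * (real (Suc k) - 2) / 6 * y^3 + y * B"
    by (simp add: A_def B_def field_simps power2_eq_square power3_eq_cube)
  moreover have "0 \<le> y * B" using B_nonneg assms by simp
  ultimately show ?case by (simp add: pow_defect_Suc)
qed (simp add: pow_defect_def)

lemma pow_defect_quadratic:
  assumes y: "0 \<le> y" "y \<le> 1" and ky: "real k * y \<le> \<delta>"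
  shows "real k * (real k - 1) / 2 * y^2 * (1 - \<delta>/3) \<le> pow_defect k y"
    and "pow_defect k y \<le> real k * (real k - 1) / 2 * y^2"
proof -
  define Q where "Q = real k * (real k - 1) / 2 * y^2"
  have Q_nonneg: "0 \<le> Q" by (cases k) (auto simp: Q_def)
  have "(real k - 2) * y \<le> \<delta>" using y ky by (smt (verit) mult_right_mono)
  then have "Q * ((real k - 2) * y / 3) \<le> Q * (\<delta> / 3)"
    using Q_nonneg by (intro mult_left_mono) auto
  moreover have "real k * (real k - 1) * (real k - 2) / 6 * y^3 = Q * ((real k - 2) * y / 3)"
    by (simp add: Q_def field_simps power2_eq_square power3_eq_cube)
  moreover have "Q * (1 - \<delta>/3) = Q - Q * (\<delta>/3)" by (simp add: right_diff_distrib)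
  ultimately show "Q * (1 - \<delta>/3) \<le> pow_defect k y"
    using pow_defect_lower[OF y, of k] unfolding Q_def[symmetric] by linarith
  show "pow_defect k y \<le> Q" unfolding Q_def by (rule pow_defect_upper[OF y])
qed

lemma exp_minus_upper: fixes y :: real assumes "0 \<le> y" shows "exp (-y) \<le> 1 - y + y^2/2"
proof -
  have "(\<lambda>t. 1 - t + t^2/2 - exp (-t)) 0 \<le> (\<lambda>t. 1 - t + t^2/2 - exp (-t)) y"
  proof (rule DERIV_nonneg_imp_nondecreasing[OF assms])
    fix x assume "0 \<le> x" "x \<le> y"
    have "0 \<le> -1 + x + exp (-x)" using exp_ge_add_one_self[of "-x"] by simp
    moreover have "((\<lambda>t. 1 - t + t^2/2 - exp (-t)) has_real_derivative -1 + x + exp (-x)) (at x)"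
      by (auto intro!: derivative_eq_intros)
    ultimately show "\<exists>d. ((\<lambda>t. 1 - t + t^2/2 - exp (-t)) has_real_derivative d) (at x) \<and> 0 \<le> d"
      by blast
  qed
  then show ?thesis by simp
qed

lemma exp_minus_lower: fixes y :: real assumes "0 \<le> y" shows "1 - y + y^2/2 - y^3/6 \<le> exp (-y)"
proof -
  have "(\<lambda>t. exp (-t) - 1 + t - t^2/2 + t^3/6) 0 \<le> (\<lambda>t. exp (-t) - 1 + t - t^2/2 + t^3/6) y"
  proof (rule DERIV_nonneg_imp_nondecreasing[OF assms])
    fix x assume "0 \<le> x" "x \<le> y"
    have "0 \<le> - exp (-x) + 1 - x + x^2/2" using exp_minus_upper[OF \<open>0 \<le> x\<close>] by simp
    moreover have "((\<lambda>t. exp (-t) - 1 + t - t^2/2 + t^3/6) has_real_derivative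
        - exp (-x) + 1 - x + x^2/2) (at x)"
      by (auto intro!: derivative_eq_intros simp: power2_eq_square)
    ultimately show "\<exists>d. ((\<lambda>t. exp (-t) - 1 + t - t^2/2 + t^3/6) has_real_derivative d) (at x)
        \<and> 0 \<le> d" by blast
  qed
  then show ?thesis by simp
qed

lemma exp_defect_upper: "0 \<le> y \<Longrightarrow> exp_defect y \<le> y^2/2"
  using exp_minus_upper[of y] by (simp add: exp_defect_def)

lemma exp_defect_lower: "0 \<le> y \<Longrightarrow> y^2/2 - y^3/6 \<le> exp_defect y"
  using exp_minus_lower[of y] by (simp add: exp_defect_def)

lemma exp_defect_ge: "y - 1 \<le> exp_defect y"
  by (simp add: exp_defect_def)

lemma exp_defect_le: "0 \<le> y \<Longrightarrow> exp_defect y \<le> y"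
  by (simp add: exp_defect_def)

lemma exp_defect_nonneg: "0 \<le> exp_defect y"
  using exp_ge_add_one_self[of "-y"] by (simp add: exp_defect_def)

lemma exp_defect_pos: assumes "0 < y" shows "0 < exp_defect y"
proof (cases "y \<le> 2")
  case True
  have "0 < y^2 * (3 - y) / 6" using assms True by simp
  also have "y^2 * (3 - y) / 6 = y^2/2 - y^3/6"
    by (simp add: field_simps power2_eq_square power3_eq_cube)
  finally show ?thesis using exp_defect_lower[of y] assms by linarith
next
  case False then show ?thesis using exp_defect_ge[of y] by linarith
qed

text \<open>\<open>M(y)\<close> is comparable to \<open>y \<and> y\<^sup>2\<close>; this is what makes \<open>\<integral> (u \<and> u\<^sup>2) \<Lambda>\<^sub>1(du)\<close> finite.\<close>

lemma exp_defect_min: assumes "0 \<le> y" shows "min y (y^2) \<le> 6 * exp_defect y"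
proof -
  consider "y \<le> 1" | "1 < y" "y \<le> 2" | "2 < y" by linarith
  then show ?thesis
  proof cases
    case 1
    have "y^3 = y^2*y" by (simp add: power2_eq_square power3_eq_cube)
    moreover have "y^2*y \<le> y^2" using 1 assms by (simp add: mult_left_le)
    moreover have "0 \<le> y^2" by simp
    ultimately have "y^2 \<le> 6 * exp_defect y" using exp_defect_lower[OF assms] by linarith
    then show ?thesis by linarith
  next
    case 2
    have "y^2/2 - y^3/6 - y/6 = y*(y*(3-y) - 1)/6"
      by (simp add: field_simps power2_eq_square power3_eq_cube)
    moreover have "0 \<le> (y-1)*(2-y)" using 2 by simp
    then have "2 \<le> y*(3-y)" by (simp add: algebra_simps)
    then have "0 \<le> y*(y*(3-y) - 1)" using 2 by simp
    ultimately have "y \<le> 6 * exp_defect y" using exp_defect_lower[OF assms] by linarith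
    then show ?thesis by linarith
  next
    case 3 then show ?thesis using exp_defect_ge[of y] by linarith
  qed
qed

lemma exp_defect_scale_le:
  assumes "0 \<le> l" "0 \<le> u" shows "exp_defect (l*u) \<le> max l (l^2) * min u (u^2)"
proof -
  have lin: "exp_defect (l*u) \<le> l*u" using assms by (intro exp_defect_le) simp
  have quad: "exp_defect (l*u) \<le> l^2*u^2"
    using exp_defect_upper[of "l*u"] exp_defect_nonneg[of "l*u"] assms
    by (simp add: power_mult_distrib)
  show ?thesis
  proof (cases "u \<le> u^2")
    case True
    then have "l * u \<le> max l (l^2) * u" using assms by (intro mult_right_mono) auto
    then show ?thesis using lin True by (simp add: min_def)
  next
    case False
    then have "l^2 * u^2 \<le> max l (l^2) * u^2" by (intro mult_right_mono) auto
    then show ?thesis using quad False by (simp add: min_def)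
  qed
qed

lemma exp_pow_compare:
  assumes "0 \<le> y" "y \<le> 1/2"
  shows "\<bar>(1-y)^k - exp (- (real k * y))\<bar> \<le> 2 * real k * y^2"
proof -
  have upper: "(1-y)^k \<le> exp (- (real k * y))"
  proof -
    have "(1-y)^k \<le> (exp (-y))^k" using assms exp_ge_add_one_self[of "-y"]
      by (intro power_mono) auto
    then show ?thesis by (simp add: exp_of_nat_mult[symmetric])
  qed
  have "- y - 2 * y^2 \<le> ln (1 - y)" by (rule ln_one_minus_pos_lower_bound) (use assms in auto)
  then have "exp (real k * (- y - 2 * y^2)) \<le> exp (real k * ln (1 - y))"
    by (intro exp_mono mult_left_mono) auto
  also have "exp (real k * ln (1 - y)) = (1-y)^k" using assms by (simp add: exp_of_nat_mult)
  finally have lower1: "exp (- (real k * y)) * exp (- (2 * real k * y^2)) \<le> (1-y)^k"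
    by (simp add: exp_add[symmetric] algebra_simps)
  have "1 - 2 * real k * y^2 \<le> exp (- (2 * real k * y^2))"
    using exp_ge_add_one_self[of "- (2 * real k * y^2)"] by simp
  then have "exp (- (real k * y)) * (1 - 2 * real k * y^2)
      \<le> exp (- (real k * y)) * exp (- (2 * real k * y^2))"
    by (intro mult_left_mono) auto
  with lower1 have lower: "exp (- (real k * y)) - exp (- (real k * y)) * (2 * real k * y^2) \<le> (1-y)^k"
    by (simp add: algebra_simps)
  have "exp (- (real k * y)) \<le> 1" using assms by simp
  then have "exp (- (real k * y)) * (2 * real k * y^2) \<le> 2 * real k * y^2"
    by (intro mult_left_le_one_le) auto
  then show ?thesis using upper lower by (simp add: abs_if)
qed

lemma pow_defect_exp_compare:
  assumes "0 \<le> y" "y \<le> 1/2"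
  shows "\<bar>pow_defect k y - exp_defect (real k * y)\<bar> \<le> 2 * real k * y^2"
  using exp_pow_compare[OF assms, of k] by (simp add: pow_defect_def exp_defect_def)

section \<open>The limit kernel \<open>G(\<lambda>, v)\<close>\<close>

text \<open>The change of variables \<open>u \<mapsto> u/(1+u)\<close> maps \<open>[0,\<infinity>)\<close> into \<open>[0,1)\<close>, with inverse \<open>v \<mapsto> v/(1-v)\<close>;
  it compactifies the scale \<open>u = k/b\<close> so that the mixing laws below live on \<open>[0,1]\<close>.\<close>

definition odds :: "real \<Rightarrow> real" where
  "odds v = v / (1 - v)"

definition squash :: "real \<Rightarrow> real" where
  "squash u = u / (1 + u)"

lemma odds_squash: "0 \<le> u \<Longrightarrow> odds (squash u) = u"
  by (simp add: odds_def squash_def field_simps)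

lemma squash_bounds: "0 \<le> u \<Longrightarrow> 0 \<le> squash u \<and> squash u \<le> 1"
  by (simp add: squash_def divide_le_eq)

definition ratio_kernel :: "real \<Rightarrow> real \<Rightarrow> real" where
  "ratio_kernel l v = (if v \<le> 0 then l^2 else if 1 \<le> v then l
     else exp_defect (l * odds v) / exp_defect (odds v))"

lemma ratio_kernel_squash:
  assumes "0 < u" shows "ratio_kernel l (squash u) = exp_defect (l*u) / exp_defect u"
proof -
  have "\<not> squash u \<le> 0" "\<not> 1 \<le> squash u" using assms by (auto simp: squash_def field_simps)
  then show ?thesis using assms by (simp add: ratio_kernel_def odds_squash)
qed

lemma ratio_lower:
  fixes A B a \<beta> :: real
  assumes "a \<le> A" "0 \<le> A" "0 < B" "B \<le> \<beta>" shows "a / \<beta> \<le> A / B"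
proof (cases "a \<le> 0")
  case True
  then have "a / \<beta> \<le> 0" using assms by (simp add: divide_nonpos_pos)
  also have "0 \<le> A / B" using assms by simp
  finally show ?thesis .
next
  case False
  have "a / \<beta> \<le> a / B" using False assms by (intro divide_left_mono) auto
  also have "\<dots> \<le> A / B" using assms by (intro divide_right_mono) auto
  finally show ?thesis .
qed

lemma ratio_upper:
  fixes A B \<alpha> \<beta> :: real
  assumes "A \<le> \<alpha>" "0 \<le> \<alpha>" "0 < \<beta>" "\<beta> \<le> B" shows "A / B \<le> \<alpha> / \<beta>"
proof -
  have "A / B \<le> \<alpha> / B" using assms by (intro divide_right_mono) auto
  also have "\<dots> \<le> \<alpha> / \<beta>" using assms by (intro divide_left_mono) auto
  finally show ?thesis .
qed

lemma exp_defect_ratio_small: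
  assumes "0 \<le> l" "0 < u" "u \<le> 1"
  shows "l^2 * (1 - l*u/3) \<le> exp_defect (l*u) / exp_defect u"
    and "exp_defect (l*u) / exp_defect u \<le> l^2 / (1 - u/3)"
proof -
  have pos: "0 < exp_defect u" using assms by (intro exp_defect_pos)
  have "(l*u)^2/2 - (l*u)^3/6 = (u^2/2) * (l^2 * (1 - l*u/3))"
    by (simp add: field_simps power2_eq_square power3_eq_cube)
  then have "(u^2/2) * (l^2 * (1 - l*u/3)) / (u^2/2) \<le> exp_defect (l*u) / exp_defect u"
    using exp_defect_lower[of "l*u"] exp_defect_upper[of u] assms pos
    by (intro ratio_lower) (auto simp: exp_defect_nonneg)
  then show "l^2 * (1 - l*u/3) \<le> exp_defect (l*u) / exp_defect u" using assms by simp
  have "u^2/2 - u^3/6 = (u^2/2) * (1 - u/3)"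
    by (simp add: field_simps power2_eq_square power3_eq_cube)
  moreover have "exp_defect (l*u) \<le> (u^2/2) * l^2"
    using exp_defect_upper[of "l*u"] assms by (simp add: power_mult_distrib algebra_simps)
  ultimately have "exp_defect (l*u) / exp_defect u \<le> ((u^2/2) * l^2) / ((u^2/2) * (1 - u/3))"
    using exp_defect_lower[of u] assms by (intro ratio_upper) auto
  also have "\<dots> = l^2 / (1 - u/3)" using assms by simp
  finally show "exp_defect (l*u) / exp_defect u \<le> l^2 / (1 - u/3)" .
qed

lemma exp_defect_ratio_large:
  assumes "0 \<le> l" "1 < u"
  shows "l - 1/u \<le> exp_defect (l*u) / exp_defect u"
    and "exp_defect (l*u) / exp_defect u \<le> l*u / (u - 1)"
proof -
  have pos: "0 < exp_defect u" using assms by (intro exp_defect_pos) simp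
  have "(l*u - 1) / u \<le> exp_defect (l*u) / exp_defect u"
    using assms pos by (intro ratio_lower) (auto simp: exp_defect_nonneg exp_defect_ge exp_defect_le)
  then show "l - 1/u \<le> exp_defect (l*u) / exp_defect u" using assms by (simp add: diff_divide_distrib)
  show "exp_defect (l*u) / exp_defect u \<le> l*u / (u - 1)"
    using assms pos by (intro ratio_upper) (auto simp: exp_defect_ge exp_defect_le)
qed

lemma ratio_kernel_bound:
  assumes "0 \<le> l" shows "\<bar>ratio_kernel l v\<bar> \<le> 6 * max l (l^2)"
proof -
  consider "v \<le> 0" | "1 \<le> v" | "0 < v" "v < 1" by linarith
  then show ?thesis
  proof cases
    case 3
    define U where "U = odds v"
    have U: "0 < U" using 3 by (simp add: U_def odds_def)
    have m: "0 < min U (U^2)" using U by simp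
    have "exp_defect (l*U) / exp_defect U \<le> (max l (l^2) * min U (U^2)) / (min U (U^2) / 6)"
      using U m exp_defect_min[of U] assms by (intro ratio_upper exp_defect_scale_le) auto
    also have "\<dots> = 6 * max l (l^2)"
      using m by (metis (no_types) less_irrefl nonzero_mult_div_cancel_right times_divide_eq_right
          divide_divide_eq_right mult.commute)
    finally show ?thesis using 3 exp_defect_nonneg[of "l*U"] exp_defect_nonneg[of U]
      by (simp add: ratio_kernel_def U_def)
  qed (use assms in \<open>auto simp: ratio_kernel_def\<close>)
qed

lemma isCont_clamp:
  fixes f :: "real \<Rightarrow> real"
  assumes f: "continuous_on {0<..<1} f" "(f \<longlongrightarrow> a) (at_right 0)" "(f \<longlongrightarrow> c) (at_left 1)"
  shows "isCont (\<lambda>v. if v \<le> 0 then a else if 1 \<le> v then c else f v) x"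
proof -
  define g where "g = (\<lambda>v::real. if v \<le> 0 then a else if 1 \<le> v then c else f v)"
  have near: "isCont g x" if "open S" "x \<in> S" "\<And>v. v \<in> S \<Longrightarrow> g v = h v" "isCont h x" for S h
  proof -
    have "eventually (\<lambda>v. v \<in> S) (nhds x)" using that by (intro eventually_nhds_in_open)
    then have "eventually (\<lambda>v. g v = h v) (nhds x)" by eventually_elim (use that in auto)
    then show ?thesis using that(4) by (subst isCont_cong) auto
  qed
  have side: "(g \<longlongrightarrow> L) F" if "eventually (\<lambda>v. v \<in> S) F" "\<And>v. v \<in> S \<Longrightarrow> h v = g v"
    "(h \<longlongrightarrow> L) F" for S h L and F :: "real filter"
  proof -
    have "eventually (\<lambda>v. h v = g v) F" using that(1) by eventually_elim (use that in auto)
    then show ?thesis using tendsto_cong that(3) by blast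
  qed
  have "eventually (\<lambda>v. v \<in> {-1<..<0}) (at_left (0::real))" by (rule eventually_at_left_real) simp
  from side[OF this] have left0: "(g \<longlongrightarrow> a) (at_left 0)" by (simp add: g_def)
  have "eventually (\<lambda>v. v \<in> {0<..<1}) (at_right (0::real))" by (rule eventually_at_right_real) simp
  from side[OF this] have right0: "(g \<longlongrightarrow> a) (at_right 0)" using f(2) by (simp add: g_def)
  have "eventually (\<lambda>v. v \<in> {0<..<1}) (at_left (1::real))" by (rule eventually_at_left_real) simp
  from side[OF this] have left1: "(g \<longlongrightarrow> c) (at_left 1)" using f(3) by (simp add: g_def)
  have "eventually (\<lambda>v. v \<in> {1<..<2}) (at_right (1::real))" by (rule eventually_at_right_real) simp
  from side[OF this] have right1: "(g \<longlongrightarrow> c) (at_right 1)" by (simp add: g_def)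
  consider "x < 0" | "x = 0" | "0 < x" "x < 1" | "x = 1" | "1 < x" by linarith
  then have "isCont g x"
  proof cases
    case 1 then show ?thesis by (intro near[of "{..<0}" "\<lambda>_. a"]) (auto simp: g_def)
  next
    case 5 then show ?thesis by (intro near[of "{1<..}" "\<lambda>_. c"]) (auto simp: g_def)
  next
    case 3
    have "isCont f x" using f(1) 3 by (intro continuous_on_interior[of "{0<..<1}"]) auto
    then show ?thesis using 3 by (intro near[of "{0<..<1}" f]) (auto simp: g_def)
  next
    case 2 then show ?thesis
      unfolding isCont_def using filterlim_split_at[OF left0 right0] by (simp add: g_def)
  next
    case 4 then show ?thesis
      unfolding isCont_def using filterlim_split_at[OF left1 right1] by (simp add: g_def)
  qed
  then show ?thesis by (simp add: g_def)
qed

lemma exp_defect_ratio_at_0: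
  assumes "0 \<le> l"
  shows "((\<lambda>v. exp_defect (l * odds v) / exp_defect (odds v)) \<longlongrightarrow> l^2) (at_right 0)"
proof (rule tendsto_sandwich)
  have near: "eventually (\<lambda>v. v \<in> {0<..<1/2}) (at_right (0::real))"
    by (rule eventually_at_right_real) simp
  have odds: "0 < odds v" "odds v \<le> 1" if "v \<in> {0<..<1/2}" for v
    using that by (auto simp: odds_def field_simps)
  from near show "eventually (\<lambda>v. l^2 * (1 - l * odds v / 3)
      \<le> exp_defect (l * odds v) / exp_defect (odds v)) (at_right 0)"
    by eventually_elim (use exp_defect_ratio_small(1) assms odds in blast)
  from near show "eventually (\<lambda>v. exp_defect (l * odds v) / exp_defect (odds v)
      \<le> l^2 / (1 - odds v / 3)) (at_right 0)"
    by eventually_elim (use exp_defect_ratio_small(2) assms odds in blast)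
  have "((\<lambda>v. l^2 * (1 - l * odds v / 3)) \<longlongrightarrow> l^2 * (1 - l * odds 0 / 3)) (at 0)"
    unfolding odds_def by (intro tendsto_intros) auto
  then show "((\<lambda>v. l^2 * (1 - l * odds v / 3)) \<longlongrightarrow> l^2) (at_right 0)"
    by (auto simp: odds_def intro: tendsto_mono[OF at_le])
  have "((\<lambda>v. l^2 / (1 - odds v / 3)) \<longlongrightarrow> l^2 / (1 - odds 0 / 3)) (at 0)"
    unfolding odds_def by (intro tendsto_intros) auto
  then show "((\<lambda>v. l^2 / (1 - odds v / 3)) \<longlongrightarrow> l^2) (at_right 0)"
    by (auto simp: odds_def intro: tendsto_mono[OF at_le])
qed

lemma exp_defect_ratio_at_1:
  assumes "0 \<le> l"
  shows "((\<lambda>v. exp_defect (l * odds v) / exp_defect (odds v)) \<longlongrightarrow> l) (at_left 1)"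
proof (rule tendsto_sandwich)
  have near: "eventually (\<lambda>v. v \<in> {3/4<..<1}) (at_left (1::real))"
    by (rule eventually_at_left_real) simp
  have odds: "1 < odds v" "1 / odds v = (1-v)/v" "l * odds v / (odds v - 1) = l * v / (2 * v - 1)"
    if "v \<in> {3/4<..<1}" for v
  proof -
    have "odds v - 1 = (2 * v - 1) / (1 - v)" using that by (simp add: odds_def field_simps)
    then show "l * odds v / (odds v - 1) = l * v / (2 * v - 1)" using that by (simp add: odds_def)
  qed (use that in \<open>auto simp: odds_def field_simps\<close>)
  from near show "eventually (\<lambda>v. l - (1-v)/v
      \<le> exp_defect (l * odds v) / exp_defect (odds v)) (at_left 1)"
    by eventually_elim (metis exp_defect_ratio_large(1) assms odds(1,2))
  from near show "eventually (\<lambda>v. exp_defect (l * odds v) / exp_defect (odds v)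
      \<le> l * v / (2 * v - 1)) (at_left 1)"
    by eventually_elim (metis exp_defect_ratio_large(2) assms odds(1,3))
  have "((\<lambda>v::real. l - (1-v)/v) \<longlongrightarrow> l - (1-1)/1) (at 1)"
    by (intro tendsto_intros) auto
  then show "((\<lambda>v::real. l - (1-v)/v) \<longlongrightarrow> l) (at_left 1)"
    by (auto intro: tendsto_mono[OF at_le])
  have "((\<lambda>v::real. l * v / (2 * v - 1)) \<longlongrightarrow> l * 1 / (2 * 1 - 1)) (at 1)"
    by (intro tendsto_intros) auto
  then show "((\<lambda>v::real. l * v / (2 * v - 1)) \<longlongrightarrow> l) (at_left 1)"
    by (auto intro: tendsto_mono[OF at_le])
qed

lemma ratio_kernel_isCont:
  assumes "0 \<le> l" shows "isCont (ratio_kernel l) x"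
proof -
  have "\<forall>v\<in>{0<..<1}. exp_defect (odds v) \<noteq> 0"
    by (auto intro!: exp_defect_pos[THEN less_imp_neq, symmetric] simp: odds_def)
  then have "continuous_on {0<..<1} (\<lambda>v. exp_defect (l * odds v) / exp_defect (odds v))"
    unfolding exp_defect_def odds_def by (auto intro!: continuous_intros)
  from isCont_clamp[OF this exp_defect_ratio_at_0[OF assms] exp_defect_ratio_at_1[OF assms]]
  show ?thesis by (simp add: ratio_kernel_def[abs_def])
qed

lemma ratio_kernel_measurable [measurable]:
  "0 \<le> l \<Longrightarrow> ratio_kernel l \<in> borel_measurable borel"
  by (rule borel_measurable_continuous_onI, rule continuous_at_imp_continuous_on)
    (use ratio_kernel_isCont in blast)

section \<open>Uniform approximation \<open>N_k(l/b) \<approx> N_k(1/b) G(l, k/(k+b))\<close>\<close>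

lemma abs_sub_mult_interval:
  fixes A B q lo hi :: real
  assumes "0 < B" "lo \<le> A / B" "A / B \<le> hi" "lo \<le> q" "q \<le> hi"
  shows "\<bar>A - B * q\<bar> \<le> (hi - lo) * B"
proof -
  have "A - B * q = B * (A / B - q)" using assms(1) by (simp add: field_simps)
  moreover have "\<bar>A / B - q\<bar> \<le> hi - lo" using assms by (simp add: abs_le_iff)
  ultimately show ?thesis using assms(1) by (simp add: abs_mult mult.commute mult_left_mono)
qed

lemma abs_sub_mult_ratio:
  fixes A B A' B' :: real
  assumes "0 < B'" "0 \<le> A'"
  shows "\<bar>A - B * (A'/B')\<bar> \<le> \<bar>A - A'\<bar> + A'/B' * \<bar>B' - B\<bar>"
proof -
  have "A - B * (A'/B') = (A - A') + A'/B' * (B' - B)" using assms by (simp add: field_simps)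
  moreover have "\<bar>A'/B' * (B' - B)\<bar> = A'/B' * \<bar>B' - B\<bar>" using assms by (simp add: abs_mult)
  ultimately show ?thesis by (metis abs_triangle_ineq)
qed

text \<open>Small scale \<open>k y \<le> \<delta>\<close>: both \<open>N_k(l y)/N_k(y)\<close> and \<open>M(l k y)/M(k y)\<close> are within \<open>O(\<delta>)\<close> of \<open>l\<^sup>2\<close>.\<close>

lemma kernel_small:
  fixes l y \<delta> :: real and k :: nat
  assumes l: "0 < l" and k: "2 \<le> k" and y: "0 < y" "y \<le> 1" "l * y \<le> 1"
    and ky: "real k * y \<le> \<delta>" and \<delta>: "\<delta> \<le> 1"
  shows "\<bar>pow_defect k (l*y) - pow_defect k y * (exp_defect (l * (real k * y)) / exp_defect (real k * y))\<bar>
    \<le> l^2 * (1+l) * \<delta> * pow_defect k y"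
proof -
  define Q where "Q = real k * (real k - 1) / 2 * y^2"
  define lo where "lo = l^2 * (1 - l * \<delta> / 3)"
  define hi where "hi = l^2 / (1 - \<delta>/3)"
  have Q: "0 < Q" using k y by (simp add: Q_def)
  have \<delta>3: "0 < 1 - \<delta>/3" using \<delta> by simp
  have N_y: "Q * (1 - \<delta>/3) \<le> pow_defect k y" "pow_defect k y \<le> Q"
    using pow_defect_quadratic[OF _ y(2) ky] y unfolding Q_def by auto
  have "real k * (l*y) \<le> l * \<delta>" using ky l by (simp add: mult.left_commute)
  moreover have "real k * (real k - 1) / 2 * (l*y)^2 = l^2 * Q" by (simp add: Q_def power_mult_distrib)
  ultimately have N_ly: "l^2 * Q * (1 - l * \<delta> / 3) \<le> pow_defect k (l*y)" "pow_defect k (l*y) \<le> l^2 * Q"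
    using pow_defect_quadratic[OF _ y(3), of k "l * \<delta>"] l y by auto
  have N_pos: "0 < pow_defect k y" using N_y(1) Q \<delta>3 by (smt (verit) mult_pos_pos)
  have "lo * Q / Q \<le> pow_defect k (l*y) / pow_defect k y"
    using N_ly N_y N_pos pow_defect_nonneg[of "l*y" k] l y
    by (intro ratio_lower) (auto simp: lo_def algebra_simps)
  then have R_lo: "lo \<le> pow_defect k (l*y) / pow_defect k y" using Q by simp
  have "pow_defect k (l*y) / pow_defect k y \<le> (l^2 * Q) / (Q * (1 - \<delta>/3))"
    using N_ly N_y Q \<delta>3 by (intro ratio_upper) auto
  then have R_hi: "pow_defect k (l*y) / pow_defect k y \<le> hi" using Q by (simp add: hi_def)
  have u: "0 < real k * y" "real k * y \<le> 1" using k y ky \<delta> by auto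
  have "lo \<le> l^2 * (1 - l * (real k * y) / 3)"
    using ky l by (auto simp: lo_def intro!: mult_left_mono)
  then have G_lo: "lo \<le> exp_defect (l * (real k * y)) / exp_defect (real k * y)"
    using exp_defect_ratio_small(1)[of l, OF _ u] l by linarith
  have "l^2 / (1 - (real k * y)/3) \<le> hi"
    using ky l \<delta>3 by (auto simp: hi_def intro!: divide_left_mono)
  then have G_hi: "exp_defect (l * (real k * y)) / exp_defect (real k * y) \<le> hi"
    using exp_defect_ratio_small(2)[of l, OF _ u] l by linarith
  have "hi - lo = l^2 * \<delta> / (3 - \<delta>) + l^3 * \<delta> / 3"
    using \<delta>3 by (simp add: hi_def lo_def field_simps power2_eq_square power3_eq_cube)
  also have "\<dots> \<le> l^2 * \<delta> / 1 + l^3 * \<delta>"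
    using \<delta> l ky u by (intro add_mono divide_left_mono) auto
  also have "\<dots> = l^2 * (1+l) * \<delta>" by (simp add: algebra_simps power2_eq_square power3_eq_cube)
  finally have "hi - lo \<le> l^2 * (1+l) * \<delta>" .
  moreover have "\<bar>pow_defect k (l*y) - pow_defect k y * (exp_defect (l * (real k * y)) / exp_defect (real k * y))\<bar>
      \<le> (hi - lo) * pow_defect k y"
    by (rule abs_sub_mult_interval[OF N_pos R_lo R_hi G_lo G_hi])
  ultimately show ?thesis using N_pos by (smt (verit) mult_right_mono)
qed

lemma pow_defect_exp_compare_scaled:
  fixes l b :: real and k :: nat
  assumes "0 \<le> l" "2 * l \<le> b" "0 < b"
  shows "\<bar>pow_defect k (l/b) - exp_defect (l * (real k / b))\<bar> \<le> 2 * l^2 * (real k / b) / b"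
proof -
  have "0 \<le> l/b" "l/b \<le> 1/2" using assms by (auto simp: field_simps)
  from pow_defect_exp_compare[OF this, of k]
  have "\<bar>pow_defect k (l/b) - exp_defect (real k * (l/b))\<bar> \<le> 2 * real k * (l/b)^2" .
  moreover have "real k * (l/b) = l * (real k / b)" "2 * real k * (l/b)^2 = 2 * l^2 * (real k / b) / b"
    using assms by (simp_all add: power2_eq_square field_simps)
  ultimately show ?thesis by (simp only:)
qed

text \<open>Large scale \<open>u = k/b > \<delta>\<close>: the Poisson errors of numerator and denominator are small
  compared with \<open>N_k(1/b) \<ge> M(u) - 2u/b \<ge> \<delta> u/12\<close> once \<open>b\<close> is large.\<close>

lemma kernel_large:
  fixes l u \<delta> b \<epsilon> :: real and k :: nat
  assumes l: "0 < l" and b: "2 * l \<le> b" "2 \<le> b" and \<delta>: "0 < \<delta>" "\<delta> \<le> 1"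
    and u: "u = real k / b" "\<delta> < u" and \<epsilon>: "0 < \<epsilon>"
    and b1: "24 / \<delta> \<le> b" and b2: "12 * (2*l^2 + 12*l/\<delta>) / (\<epsilon>*\<delta>) \<le> b"
  shows "\<bar>pow_defect k (l/b) - pow_defect k (1/b) * (exp_defect (l*u) / exp_defect u)\<bar>
    \<le> \<epsilon> * pow_defect k (1/b)"
proof -
  have b_pos: "0 < b" using b by simp
  have u_pos: "0 < u" using u \<delta> by simp
  have E1: "\<bar>pow_defect k (l/b) - exp_defect (l*u)\<bar> \<le> 2*l^2*u/b"
    using pow_defect_exp_compare_scaled[of l b k] l b b_pos u by simp
  have E2: "\<bar>exp_defect u - pow_defect k (1/b)\<bar> \<le> 2*u/b"
    using pow_defect_exp_compare_scaled[of 1 b k] b b_pos u by (simp add: abs_minus_commute)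
  have M_lower: "\<delta>*u/6 \<le> exp_defect u"
  proof -
    have "\<delta>*u \<le> u" using \<delta> u_pos by (simp add: mult_le_cancel_right1)
    moreover have "\<delta>*u \<le> u^2" using u(2) u_pos by (simp add: power2_eq_square mult_right_mono)
    ultimately have "\<delta>*u \<le> min u (u^2)" by simp
    then show ?thesis using exp_defect_min[of u] u_pos by linarith
  qed
  have M_pos: "0 < exp_defect u" using u_pos by (rule exp_defect_pos)
  have small: "2*u/b \<le> \<delta>*u/12"
  proof -
    have "1/b \<le> \<delta>/24" using b1 \<delta> b_pos by (simp add: field_simps)
    then have "u * (1/b) \<le> u * (\<delta>/24)" using u_pos by (intro mult_left_mono) auto
    moreover have "2*u/b = 2*(u*(1/b))" "\<delta>*u/12 = 2*(u*(\<delta>/24))" by simp_all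
    ultimately show ?thesis by linarith
  qed
  have N_lower: "\<delta>*u/12 \<le> pow_defect k (1/b)" using E2 M_lower small by linarith
  have "exp_defect (l*u) / exp_defect u \<le> (l*u) / (\<delta>*u/6)"
    using exp_defect_le[of "l*u"] M_lower M_pos l u_pos \<delta> by (intro ratio_upper) auto
  also have "\<dots> = 6*l/\<delta>" using u_pos \<delta> by (simp add: field_simps)
  finally have q: "exp_defect (l*u) / exp_defect u \<le> 6*l/\<delta>" .
  have "\<bar>pow_defect k (l/b) - pow_defect k (1/b) * (exp_defect (l*u) / exp_defect u)\<bar>
      \<le> \<bar>pow_defect k (l/b) - exp_defect (l*u)\<bar>
        + exp_defect (l*u) / exp_defect u * \<bar>exp_defect u - pow_defect k (1/b)\<bar>"
    using M_pos exp_defect_nonneg by (rule abs_sub_mult_ratio)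
  also have "\<dots> \<le> 2*l^2*u/b + (6*l/\<delta>) * (2*u/b)"
    using E1 E2 q M_pos exp_defect_nonneg[of "l*u"] l \<delta> by (intro add_mono mult_mono) auto
  also have "\<dots> = u * ((2*l^2 + 12*l/\<delta>) / b)" using \<delta> b_pos by (simp add: field_simps)
  also have "\<dots> \<le> u * (\<epsilon>*\<delta>/12)"
  proof -
    have "(2*l^2 + 12*l/\<delta>) / b \<le> \<epsilon>*\<delta>/12" using b2 b_pos \<epsilon> \<delta> by (simp add: field_simps)
    then show ?thesis using u_pos by (intro mult_left_mono) auto
  qed
  also have "\<dots> = \<epsilon> * (\<delta>*u/12)" by simp
  also have "\<dots> \<le> \<epsilon> * pow_defect k (1/b)" using N_lower \<epsilon> by (intro mult_left_mono) auto
  finally show ?thesis .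
qed

text \<open>Combining both regimes at a fixed scale \<open>b\<close>: the threshold \<open>\<delta>\<close> between them is chosen so
  that the small-scale error \<open>l\<^sup>2(1+l)\<delta>\<close> is below \<open>\<epsilon>\<close>, and \<open>b\<close> is large enough for the
  large-scale estimate.\<close>

lemma kernel_approx_at_scale:
  fixes l \<epsilon> \<delta> b :: real and k :: nat
  assumes l: "0 < l" and \<epsilon>: "0 < \<epsilon>" and \<delta>: "0 < \<delta>" "\<delta> \<le> 1" "l^2 * (1+l) * \<delta> \<le> \<epsilon>"
    and b: "2 \<le> b" "2*l \<le> b" "24/\<delta> \<le> b" "12 * (2*l^2 + 12*l/\<delta>) / (\<epsilon>*\<delta>) \<le> b"
  shows "\<bar>pow_defect k (l/b) - pow_defect k (1/b) * ratio_kernel l (squash (real k / b))\<bar>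
    \<le> \<epsilon> * pow_defect k (1/b)"
proof (cases "k \<ge> 2")
  case False
  then have "k = 0 \<or> k = 1" by auto
  then show ?thesis by (auto simp: pow_defect_def)
next
  case k: True
  define u where "u = real k / b"
  have b_pos: "0 < b" using b by simp
  have u_pos: "0 < u" using k b_pos by (simp add: u_def)
  have G: "ratio_kernel l (squash (real k / b)) = exp_defect (l*u) / exp_defect u"
    using ratio_kernel_squash[OF u_pos] by (simp add: u_def)
  show ?thesis
  proof (cases "u \<le> \<delta>")
    case True
    have "\<bar>pow_defect k (l*(1/b)) - pow_defect k (1/b)
        * (exp_defect (l * (real k * (1/b))) / exp_defect (real k * (1/b)))\<bar>
        \<le> l^2 * (1+l) * \<delta> * pow_defect k (1/b)"
      using b_pos b l True \<delta> by (intro kernel_small[OF l k]) (auto simp: u_def field_simps)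
    also have "\<dots> \<le> \<epsilon> * pow_defect k (1/b)"
      using \<delta>(3) pow_defect_nonneg[of "1/b" k] b by (intro mult_right_mono) auto
    finally show ?thesis using G by (simp add: u_def)
  next
    case False
    then show ?thesis using G kernel_large[OF l b(2,1) \<delta>(1,2) u_def _ \<epsilon> b(3,4)] by simp
  qed
qed

lemma kernel_approx:
  fixes l \<epsilon> :: real
  assumes l: "0 \<le> l" and \<epsilon>: "0 < \<epsilon>"
  shows "\<exists>B0. 1 \<le> B0 \<and> l \<le> B0 \<and> (\<forall>b\<ge>B0. \<forall>k.
    \<bar>pow_defect k (l/b) - pow_defect k (1/b) * ratio_kernel l (squash (real k / b))\<bar>
      \<le> \<epsilon> * pow_defect k (1/b))"
proof (cases "l = 0")
  case True
  have "0 \<le> pow_defect k (1/b)" if "1 \<le> b" for b :: real and k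
    using that by (intro pow_defect_nonneg) auto
  moreover have "ratio_kernel 0 v = 0" for v by (simp add: ratio_kernel_def exp_defect_def)
  ultimately show ?thesis using True \<epsilon> by (intro exI[of _ 1]) (auto simp: pow_defect_def)
next
  case False
  then have l: "0 < l" using l by simp
  define \<delta> where "\<delta> = min 1 (\<epsilon> / (l^2 * (1+l)))"
  have \<delta>: "0 < \<delta>" "\<delta> \<le> 1" using l \<epsilon> by (auto simp: \<delta>_def)
  have "\<delta> \<le> \<epsilon> / (l^2 * (1+l))" by (simp add: \<delta>_def)
  then have \<delta>_small: "l^2 * (1+l) * \<delta> \<le> \<epsilon>" using l by (simp add: pos_le_divide_eq mult.commute)
  define B0 where "B0 = 2 + 2*l + 24/\<delta> + 12 * (2*l^2 + 12*l/\<delta>) / (\<epsilon>*\<delta>)"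
  have B0_terms: "0 \<le> 24/\<delta>" "0 \<le> 12 * (2*l^2 + 12*l/\<delta>) / (\<epsilon>*\<delta>)" using \<delta> l \<epsilon> by auto
  have "2 \<le> b" "2*l \<le> b" "24/\<delta> \<le> b" "12 * (2*l^2 + 12*l/\<delta>) / (\<epsilon>*\<delta>) \<le> b" if "B0 \<le> b" for b
    using that B0_terms l unfolding B0_def by linarith+
  then have "\<forall>b\<ge>B0. \<forall>k. \<bar>pow_defect k (l/b) - pow_defect k (1/b) * ratio_kernel l (squash (real k / b))\<bar>
      \<le> \<epsilon> * pow_defect k (1/b)"
    using kernel_approx_at_scale[OF l \<epsilon> \<delta> \<delta>_small] by blast
  moreover have "1 \<le> B0" "l \<le> B0" using B0_terms l by (simp_all add: B0_def)
  ultimately show ?thesis by blast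
qed

section \<open>Defect means, the decomposition of \<open>R_n\<close>, and finiteness of the mean\<close>

definition defect_mean :: "nat pmf \<Rightarrow> real \<Rightarrow> real" where
  "defect_mean P y = (\<integral>k. pow_defect k y \<partial>P)"

lemma power_integrable:
  fixes P :: "nat pmf" and s :: real
  assumes "0 \<le> s" "s \<le> 1" shows "integrable P (\<lambda>k. s ^ k)"
  by (rule measure_pmf.integrable_const_bound[where B=1]) (use assms in \<open>auto simp: power_le_one\<close>)

lemma pow_defect_integrable:
  fixes P :: "nat pmf"
  assumes "integrable P real" "0 \<le> y" "y \<le> 1" shows "integrable P (\<lambda>k. pow_defect k y)"
  unfolding pow_defect_def using assms power_integrable[of "1-y" P] by simp

lemma defect_mean_nonneg: "0 \<le> y \<Longrightarrow> y \<le> 1 \<Longrightarrow> 0 \<le> defect_mean P y"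
  unfolding defect_mean_def by (intro integral_nonneg_AE AE_I2 pow_defect_nonneg)

lemma gen_fun_defect:
  fixes P :: "nat pmf"
  assumes int: "integrable P real" and y: "0 \<le> y" "y \<le> 1"
  shows "(1-y) - gen_fun P (1-y) = y * ((\<integral>k. real k \<partial>P) - 1) - defect_mean P y"
proof -
  have "defect_mean P y = gen_fun P (1-y) - 1 + y * (\<integral>k. real k \<partial>P)"
    unfolding defect_mean_def pow_defect_def gen_fun_def
    using power_integrable[of "1-y" P] int y by (simp add: mult.commute)
  then show ?thesis by (simp add: algebra_simps)
qed

lemma Rfun_decomposition:
  fixes p :: "nat \<Rightarrow> nat pmf"
  assumes "integrable (p n) real" "0 < b n" "0 \<le> lam" "lam \<le> b n"
  shows "Rfun p b n lam
    = real n * ((\<integral>k. real k \<partial>p n) - 1) * lam - real n * b n * defect_mean (p n) (lam / b n)"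
proof -
  have "0 \<le> lam / b n" "lam / b n \<le> 1" using assms by (auto simp: field_simps)
  from gen_fun_defect[OF assms(1) this]
  have "Rfun p b n lam = real n * b n * (lam / b n * ((\<integral>k. real k \<partial>p n) - 1)
      - defect_mean (p n) (lam / b n))"
    by (simp add: Rfun_def)
  also have "\<dots> = real n * ((\<integral>k. real k \<partial>p n) - 1) * lam - real n * b n * defect_mean (p n) (lam / b n)"
    using assms(2) by (simp add: field_simps)
  finally show ?thesis .
qed

lemma difference_quotient_limit:
  fixes y :: "nat \<Rightarrow> real"
  assumes "y \<longlonglongrightarrow> 0" "\<And>m. 0 < y m"
  shows "(\<lambda>m. (1 - (1 - y m)^k) / y m) \<longlonglongrightarrow> real k"
proof -
  have "(1 - (1 - y m)^k) / y m = (\<Sum>i<k. (1 - y m)^i)" for m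
    using one_diff_power_eq[of "1 - y m" k] assms(2)[of m] by simp
  moreover have "(\<lambda>m. \<Sum>i<k. (1 - y m)^i) \<longlonglongrightarrow> (\<Sum>i<k. (1 - 0)^i)"
    by (intro tendsto_intros assms(1))
  ultimately show ?thesis by simp
qed

lemma finite_mean_by_fatou:
  fixes P :: "nat pmf" and y :: "nat \<Rightarrow> real"
  assumes y: "y \<longlonglongrightarrow> 0" "\<And>m. 0 < y m" "\<And>m. y m \<le> 1"
    and bound: "\<And>m. (\<integral>k. (1 - (1 - y m)^k) / y m \<partial>P) \<le> C"
  shows "integrable P real \<and> (\<integral>k. real k \<partial>P) \<le> C"
proof -
  define f where "f m k = (1 - (1 - y m)^k) / y m" for m k
  have f_nonneg: "0 \<le> f m k" for m k
    using power_le_one[of "1 - y m" k] y(2,3)[of m] by (simp add: f_def)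
  have f_int: "integrable P (f m)" for m
    unfolding f_def using power_integrable[of "1 - y m" P] y(2,3)[of m] by simp
  have f_nn_integral: "(\<integral>\<^sup>+ k. ennreal (f m k) \<partial>P) = ennreal (\<integral>k. f m k \<partial>P)" for m
    by (rule nn_integral_eq_integral[OF f_int]) (simp add: f_nonneg)
  have f_bound: "(\<integral>k. f m k \<partial>P) \<le> C" for m using bound by (simp only: f_def)
  have "0 \<le> (\<integral>k. f 0 k \<partial>P)" by (intro integral_nonneg_AE AE_I2 f_nonneg)
  then have C: "0 \<le> C" using f_bound[of 0] by linarith
  have "(\<integral>\<^sup>+ k. ennreal (real k) \<partial>P) = (\<integral>\<^sup>+ k. liminf (\<lambda>m. ennreal (f m k)) \<partial>P)"
  proof (rule nn_integral_cong)
    fix k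
    have "(\<lambda>m. ennreal (f m k)) \<longlonglongrightarrow> ennreal (real k)"
      unfolding f_def by (intro tendsto_ennrealI difference_quotient_limit y)
    then show "ennreal (real k) = liminf (\<lambda>m. ennreal (f m k))" by (simp add: lim_imp_Liminf)
  qed
  also have "\<dots> \<le> liminf (\<lambda>m. \<integral>\<^sup>+ k. ennreal (f m k) \<partial>P)"
    by (rule nn_integral_liminf) simp
  also have "\<dots> \<le> ennreal C"
    using f_bound by (intro Liminf_le always_eventually allI) (auto simp: f_nn_integral ennreal_leI)
  finally have nn_le: "(\<integral>\<^sup>+ k. ennreal (real k) \<partial>P) \<le> ennreal C" .
  then have int: "integrable P real"
    unfolding integrable_iff_bounded by (auto simp: ennreal_less_top intro: le_less_trans)
  have "(\<integral>k. real k \<partial>P) = enn2real (\<integral>\<^sup>+ k. ennreal (real k) \<partial>P)"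
    by (rule integral_eq_nn_integral) auto
  also have "\<dots> \<le> C" using nn_le C by (simp add: enn2real_leI)
  finally show ?thesis using int by simp
qed

text \<open>A linear upper bound \<open>n b ((1 - \<lambda>/b) - g(1 - \<lambda>/b)) \<le> L \<lambda>\<close> on \<open>[0,1]\<close>, as provided by a
  uniform Lipschitz bound on \<open>R_n\<close>, forces a finite mean \<open>\<le> 1 + L/n\<close>.\<close>

lemma finite_mean_of_linear_bound:
  fixes P :: "nat pmf" and B nn L :: real
  assumes B: "1 \<le> B" and nn: "0 < nn"
    and bound: "\<And>lam. 0 \<le> lam \<Longrightarrow> lam \<le> 1
      \<Longrightarrow> nn * B * ((1 - lam/B) - gen_fun P (1 - lam/B)) \<le> L * lam"
  shows "integrable P real \<and> (\<integral>k. real k \<partial>P) \<le> L/nn + 1"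
proof (rule finite_mean_by_fatou)
  define y where "y m = 1 / (B * (real m + 1))" for m
  show y_pos: "0 < y m" for m using B by (simp add: y_def)
  have "B * 1 \<le> B * (real m + 1)" for m using B by (intro mult_left_mono) auto
  then have y_le: "y m \<le> 1/B" for m using B by (simp add: y_def divide_left_mono)
  then show "y m \<le> 1" for m using B order.trans[of "y m" "1/B" 1] by simp
  have "(\<lambda>m. (1/B) * inverse (real (Suc m))) \<longlonglongrightarrow> (1/B) * 0"
    by (intro tendsto_intros LIMSEQ_inverse_real_of_nat)
  moreover have "y = (\<lambda>m. (1/B) * inverse (real (Suc m)))"
    by (auto simp: y_def fun_eq_iff divide_inverse mult.commute)
  ultimately show "y \<longlonglongrightarrow> 0" by simp
  fix m
  have lam: "0 \<le> y m * B" "y m * B \<le> 1" using y_pos[of m] y_le[of m] B by (auto simp: field_simps)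
  have "nn * B * ((1 - y m) - gen_fun P (1 - y m)) \<le> B * (L * y m)"
    using bound[OF lam] B by (simp add: mult_ac)
  then have "nn * ((1 - y m) - gen_fun P (1 - y m)) \<le> L * y m"
    using B by (simp add: mult.assoc mult.left_commute[of nn] mult_le_cancel_left_pos)
  then have "(1 - y m) - gen_fun P (1 - y m) \<le> L * y m / nn"
    using nn by (simp add: pos_le_divide_eq mult.commute)
  moreover have "(\<integral>k. (1 - (1 - y m)^k) / y m \<partial>P) = (1 - gen_fun P (1 - y m)) / y m"
    using power_integrable[of "1 - y m" P] y_pos[of m] \<open>y m \<le> 1\<close>
    by (simp add: gen_fun_def integral_diff)
  ultimately show "(\<integral>k. (1 - (1 - y m)^k) / y m \<partial>P) \<le> L/nn + 1"
    using y_pos[of m] by (simp add: divide_le_eq algebra_simps)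
qed

section \<open>Mixing laws on \<open>[0,1]\<close>\<close>

lemma normalized_pushforward:
  fixes P :: "nat pmf" and w \<phi> :: "nat \<Rightarrow> real" and m :: real and g :: "real \<Rightarrow> real"
  assumes w: "\<And>k. 0 \<le> w k" "integrable P w" and m: "m = (\<integral>k. w k \<partial>P)" "0 < m"
    and g: "g \<in> borel_measurable borel"
  shows "real_distribution (distr (density P (\<lambda>k. ennreal (w k / m))) borel \<phi>)"
    and "m * (\<integral>x. g x \<partial>distr (density P (\<lambda>k. ennreal (w k / m))) borel \<phi>) = (\<integral>k. w k * g (\<phi> k) \<partial>P)"
proof -
  define D where "D = density P (\<lambda>k. ennreal (w k / m))"
  have "emeasure D (space D) = ennreal (\<integral>k. w k / m \<partial>P)"
    unfolding D_def using w m by (simp add: emeasure_density nn_integral_eq_integral)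
  also have "(\<integral>k. w k / m \<partial>P) = 1" using m by simp
  finally interpret D: prob_space D by (intro prob_spaceI) simp
  have "prob_space (distr D borel \<phi>)" by (rule D.prob_space_distr) (simp add: D_def)
  then show "real_distribution (distr (density P (\<lambda>k. ennreal (w k / m))) borel \<phi>)"
    unfolding D_def[symmetric] by (auto simp: real_distribution_def real_distribution_axioms_def)
  have "(\<integral>x. g x \<partial>distr D borel \<phi>) = (\<integral>k. g (\<phi> k) \<partial>D)"
    by (rule integral_distr[OF _ g]) (simp add: D_def)
  also have "\<dots> = (\<integral>k. (w k / m) * g (\<phi> k) \<partial>P)"
    unfolding D_def by (subst integral_density) (use w m in auto)
  finally show "m * (\<integral>x. g x \<partial>distr (density P (\<lambda>k. ennreal (w k / m))) borel \<phi>)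
      = (\<integral>k. w k * g (\<phi> k) \<partial>P)"
    using m by (simp add: D_def)
qed

definition mixing_law :: "nat pmf \<Rightarrow> real \<Rightarrow> real measure" where
  "mixing_law P B = (if 0 < defect_mean P (1/B)
     then distr (density P (\<lambda>k. ennreal (pow_defect k (1/B) / defect_mean P (1/B)))) borel
       (\<lambda>k. squash (real k / B))
     else return borel 0)"

lemma mixing_law_real_distribution:
  fixes P :: "nat pmf"
  assumes "integrable P real" "1 \<le> B" shows "real_distribution (mixing_law P B)"
proof (cases "0 < defect_mean P (1/B)")
  case True
  have "0 \<le> 1/B" "1/B \<le> 1" using assms by auto
  then show ?thesis unfolding mixing_law_def using True
    by (auto intro!: normalized_pushforward(1)[where g = "\<lambda>_. 0"] pow_defect_nonneg
        pow_defect_integrable assms simp: defect_mean_def)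
qed (auto simp: mixing_law_def real_distribution_def real_distribution_axioms_def
       intro!: prob_space_return)

lemma mixing_law_integral:
  fixes P :: "nat pmf" and g :: "real \<Rightarrow> real"
  assumes int: "integrable P real" and B: "1 \<le> B" and g: "g \<in> borel_measurable borel"
  shows "defect_mean P (1/B) * (\<integral>x. g x \<partial>mixing_law P B)
    = (\<integral>k. pow_defect k (1/B) * g (squash (real k / B)) \<partial>P)"
proof -
  have y: "0 \<le> 1/B" "1/B \<le> 1" using B by auto
  show ?thesis
  proof (cases "0 < defect_mean P (1/B)")
    case True
    then show ?thesis unfolding mixing_law_def
      using normalized_pushforward(2)[of "\<lambda>k. pow_defect k (1/B)" P] pow_defect_nonneg[OF y]
        pow_defect_integrable[OF int y] g
      by (simp add: defect_mean_def)
  next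
    case False
    then have zero: "defect_mean P (1/B) = 0" using defect_mean_nonneg[OF y, of P] by simp
    then have "AE k in P. pow_defect k (1/B) = 0"
      using integral_nonneg_eq_0_iff_AE[OF pow_defect_integrable[OF int y]] pow_defect_nonneg[OF y]
      by (simp add: defect_mean_def)
    then have "(\<integral>k. pow_defect k (1/B) * g (squash (real k / B)) \<partial>P) = (\<integral>k. 0 \<partial>P)"
      by (intro integral_cong_AE) auto
    then show ?thesis using zero by simp
  qed
qed

lemma mixing_law_unit_interval:
  fixes P :: "nat pmf"
  assumes "integrable P real" "1 \<le> B" shows "measure (mixing_law P B) {-1<..1} = 1"
proof (cases "0 < defect_mean P (1/B)")
  case True
  interpret real_distribution "mixing_law P B" using assms by (rule mixing_law_real_distribution)
  have "(\<lambda>k. squash (real k / B)) -` {-1<..1} = UNIV"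
    using squash_bounds[of "real k / B" for k] assms by force
  then have "measure (mixing_law P B) {-1<..1} = measure (mixing_law P B) UNIV"
    using True by (simp add: mixing_law_def measure_distr)
  then show ?thesis using prob_space by simp
qed (simp add: mixing_law_def measure_return)

lemma defect_mean_kernel_approx:
  assumes l: "0 \<le> l" and \<epsilon>: "0 < \<epsilon>"
  shows "\<exists>B0. \<forall>B\<ge>B0. \<forall>P. integrable (measure_pmf P) real \<longrightarrow>
    \<bar>defect_mean P (l/B) - defect_mean P (1/B) * (\<integral>x. ratio_kernel l x \<partial>mixing_law P B)\<bar>
      \<le> \<epsilon> * defect_mean P (1/B)"
proof -
  obtain B0 where B0: "1 \<le> B0" "l \<le> B0" and approx: "\<And>B k. B \<ge> B0 \<Longrightarrow>
      \<bar>pow_defect k (l/B) - pow_defect k (1/B) * ratio_kernel l (squash (real k / B))\<bar>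
        \<le> \<epsilon> * pow_defect k (1/B)"
    using kernel_approx[OF l \<epsilon>] by blast
  have "\<bar>defect_mean P (l/B) - defect_mean P (1/B) * (\<integral>x. ratio_kernel l x \<partial>mixing_law P B)\<bar>
      \<le> \<epsilon> * defect_mean P (1/B)" if B: "B \<ge> B0" and int: "integrable P real" for B and P :: "nat pmf"
  proof -
    define G where "G k = pow_defect k (1/B) * ratio_kernel l (squash (real k / B))" for k
    have y: "0 \<le> l/B" "l/B \<le> 1" "0 \<le> 1/B" "1/B \<le> 1" using B B0 l by (auto simp: field_simps)
    note int_l = pow_defect_integrable[OF int y(1,2)] and int_1 = pow_defect_integrable[OF int y(3,4)]
    have "\<bar>G k\<bar> \<le> 6 * max l (l^2) * pow_defect k (1/B)" for k
      using ratio_kernel_bound[OF l] pow_defect_nonneg[OF y(3,4), of k]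
      by (auto simp: G_def abs_mult mult.commute intro: mult_left_mono)
    then have "integrable P G"
      using l pow_defect_nonneg[OF y(3,4)] by (intro Bochner_Integration.integrable_bound[OF
          integrable_mult_right[OF int_1, of "6 * max l (l^2)"]] AE_I2) (auto simp: abs_mult)
    then have "\<bar>defect_mean P (l/B) - (\<integral>k. G k \<partial>P)\<bar> \<le> (\<integral>k. \<bar>pow_defect k (l/B) - G k\<bar> \<partial>P)"
      using int_l integral_norm_bound[of P "\<lambda>k. pow_defect k (l/B) - G k"]
      by (simp add: defect_mean_def)
    also have "\<dots> \<le> (\<integral>k. \<epsilon> * pow_defect k (1/B) \<partial>P)"
    proof (rule integral_mono)
      show "\<bar>pow_defect k (l/B) - G k\<bar> \<le> \<epsilon> * pow_defect k (1/B)" for k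
        using approx[OF B] by (simp add: G_def)
    qed (use int_l int_1 \<open>integrable P G\<close> in auto)
    finally show ?thesis
      using mixing_law_integral[OF int _ ratio_kernel_measurable[OF l]] B B0
      by (simp add: G_def defect_mean_def)
  qed
  then show ?thesis by blast
qed

section \<open>The Levy measure of a kernel mixture\<close>

text \<open>A measure on \<open>(0,\<infinity>)\<close> with \<open>\<integral> (u \<and> u\<^sup>2) d\<Lambda> < \<infinity>\<close> is \<open>\<sigma>\<close>-finite: by Markov's inequality
  each \<open>{u > t}\<close>, \<open>t > 0\<close>, has finite measure.\<close>

lemma sigma_finite_of_moment:
  fixes \<Lambda> :: "real measure"
  assumes sets: "sets \<Lambda> = sets borel" and nonpos: "emeasure \<Lambda> {..0} = 0"
    and moment: "(\<integral>\<^sup>+ u. ennreal (min u (u^2)) \<partial>\<Lambda>) < \<infinity>"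
  shows "sigma_finite_measure \<Lambda>"
proof
  have space: "space \<Lambda> = UNIV" using sets_eq_imp_space_eq[OF sets] by simp
  have tail_finite: "emeasure \<Lambda> {t<..} \<noteq> \<infinity>" if t: "0 < t" for t :: real
  proof -
    define q where "q = min t (t^2)"
    have q: "0 < q" using t by (simp add: q_def)
    have "indicator {t<..} u \<le> ennreal (1/q) * ennreal (min u (u^2))" for u :: real
    proof (cases "t < u")
      case True
      have "t^2 \<le> u^2" using True t by (intro power_mono) auto
      then have "q \<le> min u (u^2)" unfolding q_def using True by (intro min.mono) auto
      then have "1 \<le> (1/q) * min u (u^2)" using q by (simp add: field_simps)
      then show ?thesis using True q by (simp add: ennreal_mult'[symmetric] ennreal_leI)
    qed simp
    then have "(\<integral>\<^sup>+ u. indicator {t<..} u \<partial>\<Lambda>) \<le> (\<integral>\<^sup>+ u. ennreal (1/q) * ennreal (min u (u^2)) \<partial>\<Lambda>)"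
      by (intro nn_integral_mono)
    then have "emeasure \<Lambda> {t<..} \<le> (\<integral>\<^sup>+ u. ennreal (1/q) * ennreal (min u (u^2)) \<partial>\<Lambda>)"
      using sets by simp
    also have "\<dots> = ennreal (1/q) * (\<integral>\<^sup>+ u. ennreal (min u (u^2)) \<partial>\<Lambda>)"
      using sets by (intro nn_integral_cmult) (simp add: measurable_cong_sets[OF sets refl])
    also have "\<dots> < \<infinity>" using moment by (simp add: ennreal_mult_less_top)
    finally show ?thesis by simp
  qed
  define A where "A = insert {..0::real} (range (\<lambda>j::nat. {1 / real (Suc j)<..}))"
  have "\<Union>A = space \<Lambda>"
  proof -
    have "x \<in> \<Union>A" for x :: real
    proof (cases "x \<le> 0")
      case False
      then obtain j where "inverse (real (Suc j)) < x" using reals_Archimedean[of x] by force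
      then show ?thesis by (auto simp: A_def inverse_eq_divide)
    qed (auto simp: A_def)
    then show ?thesis by (auto simp: space)
  qed
  moreover have "\<forall>a\<in>A. emeasure \<Lambda> a \<noteq> \<infinity>" using nonpos tail_finite by (auto simp: A_def)
  ultimately show "\<exists>A. countable A \<and> A \<subseteq> sets \<Lambda> \<and> \<Union>A = space \<Lambda> \<and> (\<forall>a\<in>A. emeasure \<Lambda> a \<noteq> \<infinity>)"
    using sets by (intro exI[of _ A]) (auto simp: A_def)
qed

text \<open>The part of a mixing law \<open>\<mu>\<close> on \<open>(0,1)\<close>, reweighted by \<open>m\<^sub>0/M(odds v)\<close> and transported to
  \<open>(0,\<infinity>)\<close> by \<open>odds\<close>, is the Levy measure \<open>\<Lambda>\<^sub>1\<close>.\<close>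

definition levy_density :: "real \<Rightarrow> real \<Rightarrow> real" where
  "levy_density m0 v = indicator {0<..<1} v * m0 / exp_defect (odds v)"

definition levy_measure :: "real measure \<Rightarrow> real \<Rightarrow> real measure" where
  "levy_measure M m0 = distr (density M (\<lambda>v. ennreal (levy_density m0 v))) borel odds"

lemma odds_measurable [measurable]: "odds \<in> borel_measurable borel"
  unfolding odds_def by measurable

lemma exp_defect_measurable [measurable]: "exp_defect \<in> borel_measurable borel"
  unfolding exp_defect_def by measurable

lemma levy_density_measurable [measurable]: "levy_density m0 \<in> borel_measurable borel"
  unfolding levy_density_def by measurable

lemma odds_pos: "0 < v \<Longrightarrow> v < 1 \<Longrightarrow> 0 < odds v"
  by (simp add: odds_def)

lemma levy_density_nonneg: "0 \<le> m0 \<Longrightarrow> 0 \<le> levy_density m0 v"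
  by (auto simp: levy_density_def indicator_def odds_pos exp_defect_pos less_imp_le)

lemma levy_measure_sets: "sets (levy_measure M m0) = sets borel"
  by (simp add: levy_measure_def)

context
  fixes M :: "real measure" and m0 :: real
  assumes M: "real_distribution M" and m0: "0 \<le> m0"
begin

interpretation real_distribution M by (rule M)

lemma measurable_M: "f \<in> borel_measurable M \<longleftrightarrow> f \<in> borel_measurable borel"
  by (simp add: measurable_cong_sets[OF events_eq_borel refl])

lemma levy_measure_nn_integral:
  assumes [measurable]: "h \<in> borel_measurable borel"
  shows "(\<integral>\<^sup>+ u. h u \<partial>levy_measure M m0) = (\<integral>\<^sup>+ v. ennreal (levy_density m0 v) * h (odds v) \<partial>M)"
  unfolding levy_measure_def
  by (simp add: nn_integral_distr nn_integral_density measurable_cong_sets[OF events_eq_borel refl])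

lemma levy_measure_nonpos: "emeasure (levy_measure M m0) {..0} = 0"
proof -
  have "emeasure (levy_measure M m0) {..0} = (\<integral>\<^sup>+ u. indicator {..0} u \<partial>levy_measure M m0)"
    by (simp add: levy_measure_sets)
  also have "\<dots> = (\<integral>\<^sup>+ v. ennreal (levy_density m0 v) * indicator {..0} (odds v) \<partial>M)"
    by (rule levy_measure_nn_integral) simp
  also have "\<dots> = (\<integral>\<^sup>+ v. 0 \<partial>M)"
    by (intro nn_integral_cong) (auto simp: levy_density_def indicator_def dest: odds_pos)
  finally show ?thesis by simp
qed

text \<open>Since \<open>u \<and> u\<^sup>2 \<le> 6 M(u)\<close>, the weight \<open>1/M(odds v)\<close> makes \<open>\<integral> (u \<and> u\<^sup>2) d\<Lambda>\<^sub>1 \<le> 6 m\<^sub>0\<close>.\<close>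

lemma levy_measure_moment: "(\<integral>\<^sup>+ u. ennreal (min u (u^2)) \<partial>levy_measure M m0) < \<infinity>"
proof -
  have "ennreal (levy_density m0 v) * ennreal (min (odds v) ((odds v)^2)) \<le> ennreal (6 * m0)" for v
  proof (cases "v \<in> {0<..<1}")
    case True
    then have U: "0 < odds v" by (auto intro: odds_pos)
    have "levy_density m0 v * min (odds v) ((odds v)^2)
        = m0 * (min (odds v) ((odds v)^2) / exp_defect (odds v))"
      using True by (simp add: levy_density_def)
    also have "\<dots> \<le> m0 * 6"
      using exp_defect_min[of "odds v"] U exp_defect_pos[OF U] m0
      by (intro mult_left_mono) (auto simp: divide_le_eq)
    finally show ?thesis
      using levy_density_nonneg[OF m0, of v] by (simp add: ennreal_mult'[symmetric] ennreal_leI)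
  qed (simp add: levy_density_def)
  then have "(\<integral>\<^sup>+ v. ennreal (levy_density m0 v) * ennreal (min (odds v) ((odds v)^2)) \<partial>M)
      \<le> (\<integral>\<^sup>+ v. ennreal (6 * m0) \<partial>M)"
    by (intro nn_integral_mono)
  also have "\<dots> = ennreal (6 * m0)" using emeasure_space_1 by simp
  finally show ?thesis by (subst levy_measure_nn_integral) (auto simp: top.not_eq_extremum
      intro: le_less_trans)
qed

lemma kernel_mixture_levy_form:
  assumes lam: "0 \<le> lam"
  shows "m0 * (\<integral>v. ratio_kernel lam v \<partial>M)
    = m0 * measure M {..0} * lam^2 + m0 * measure M {1..} * lam
      + (\<integral>u. exp_defect (lam * u) \<partial>levy_measure M m0)"
proof -
  define h where "h v = levy_density m0 v * exp_defect (lam * odds v)" for v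
  have levy: "(\<integral>u. exp_defect (lam * u) \<partial>levy_measure M m0) = (\<integral>v. h v \<partial>M)"
    unfolding levy_measure_def h_def
    by (subst integral_distr, simp, simp add: exp_defect_def, subst integral_density)
      (auto simp: levy_density_nonneg[OF m0] measurable_cong_sets[OF events_eq_borel refl]
        exp_defect_def)
  have split: "m0 * ratio_kernel lam v
      = m0 * lam^2 * indicator {..0} v + m0 * lam * indicator {1..} v + h v" for v
    by (cases "v \<le> 0"; cases "1 \<le> v") (auto simp: ratio_kernel_def levy_density_def h_def indicator_def)
  have "\<bar>h v\<bar> \<le> m0 * (6 * max lam (lam^2))" for v
  proof (cases "v \<in> {0<..<1}")
    case True
    then have "h v = m0 * ratio_kernel lam v" by (auto simp: h_def levy_density_def ratio_kernel_def)
    then show ?thesis using ratio_kernel_bound[OF lam] m0 by (simp add: abs_mult mult_left_mono)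
  qed (use m0 lam in \<open>simp add: h_def levy_density_def\<close>)
  moreover have "h \<in> borel_measurable M" unfolding measurable_M h_def by measurable
  ultimately have int_h: "integrable M h"
    by (intro integrable_const_bound[where B="m0 * (6 * max lam (lam^2))"]) auto
  have int_ind: "integrable M (indicator A :: real \<Rightarrow> real)" if "A \<in> sets borel" for A
    using that by (intro integrable_real_indicator) (auto simp: emeasure_eq_measure)
  have "m0 * (\<integral>v. ratio_kernel lam v \<partial>M) = (\<integral>v. m0 * ratio_kernel lam v \<partial>M)" by simp
  also have "\<dots> = (\<integral>v. m0 * lam^2 * indicator {..0} v + m0 * lam * indicator {1..} v + h v \<partial>M)"
    by (simp add: split)
  also have "\<dots> = m0 * measure M {..0} * lam^2 + m0 * measure M {1..} * lam + (\<integral>v. h v \<partial>M)"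
    using int_h int_ind[of "{..0}"] int_ind[of "{1..}"] by (simp add: mult_ac)
  finally show ?thesis using levy by simp
qed

end

section \<open>Compactness under condition (A)\<close>

definition drift :: "(nat \<Rightarrow> nat pmf) \<Rightarrow> nat \<Rightarrow> real" where
  "drift p n = real n * ((\<integral>k. real k \<partial>p n) - 1)"

definition defect_mass :: "(nat \<Rightarrow> nat pmf) \<Rightarrow> (nat \<Rightarrow> real) \<Rightarrow> nat \<Rightarrow> real" where
  "defect_mass p b n = real n * b n * defect_mean (p n) (1 / b n)"

text \<open>Condition (A) makes the laws eventually integrable and the drifts and masses bounded:
  the Lipschitz bound gives \<open>R_n(\<lambda>) \<le> L \<lambda>\<close>, hence a finite mean and \<open>drift \<le> L\<close>, and
  \<open>R_n(1) = drift - mass\<close> with a convergent left-hand side bounds the rest.\<close>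

lemma condition_A_bounds:
  fixes p :: "nat \<Rightarrow> nat pmf" and b :: "nat \<Rightarrow> real"
  assumes b_pos: "\<And>n. b n > 0" and b_lim: "filterlim b at_top sequentially"
    and A_lip: "\<And>a. a \<ge> 0 \<Longrightarrow> \<exists>L. \<forall>\<^sub>F n in sequentially. L-lipschitz_on {0..a} (Rfun p b n)"
    and R1: "convergent (\<lambda>n. Rfun p b n 1)"
  obtains N0 C where "\<And>n. n \<ge> N0 \<Longrightarrow> 1 \<le> b n \<and> integrable (p n) real
    \<and> \<bar>drift p n\<bar> \<le> C \<and> 0 \<le> defect_mass p b n \<and> defect_mass p b n \<le> C"
proof -
  obtain L where "\<forall>\<^sub>F n in sequentially. L-lipschitz_on {0..1} (Rfun p b n)" using A_lip[of 1] by auto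
  moreover have "\<forall>\<^sub>F n in sequentially. 1 \<le> b n" using b_lim by (simp add: filterlim_at_top)
  moreover have "\<forall>\<^sub>F n in sequentially. 1 \<le> n" by simp
  ultimately obtain N0 where N0: "\<And>n. n \<ge> N0 \<Longrightarrow> L-lipschitz_on {0..1} (Rfun p b n) \<and> 1 \<le> b n \<and> 1 \<le> n"
    unfolding eventually_sequentially by (metis (no_types, lifting) eventually_conj eventually_sequentially)
  obtain K where K: "0 < K" "\<And>n. \<bar>Rfun p b n 1\<bar> \<le> K"
    using convergent_imp_Bseq[OF R1] by (auto elim: BseqE)
  have L: "0 \<le> L" using N0[of N0] lipschitz_on_nonneg by blast
  have bounds: "1 \<le> b n \<and> integrable (p n) real \<and> \<bar>drift p n\<bar> \<le> L + K
      \<and> 0 \<le> defect_mass p b n \<and> defect_mass p b n \<le> L + K" if n: "n \<ge> N0" for n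
  proof -
    have b: "1 \<le> b n" and n1: "1 \<le> real n" using N0[OF n] by auto
    have R_le: "Rfun p b n lam \<le> L * lam" if "0 \<le> lam" "lam \<le> 1" for lam
      using lipschitz_onD[of L "{0..1}" "Rfun p b n" lam 0] N0[OF n] that
      by (simp add: Rfun_def gen_fun_def dist_real_def abs_le_iff)
    have mean: "integrable (p n) real \<and> (\<integral>k. real k \<partial>p n) \<le> L / real n + 1"
      using R_le n1 b by (intro finite_mean_of_linear_bound) (auto simp: Rfun_def)
    then have "drift p n \<le> L" using n1 by (simp add: drift_def field_simps)
    moreover have "Rfun p b n 1 = drift p n - defect_mass p b n"
      using Rfun_decomposition[of p n b 1] mean b by (simp add: drift_def defect_mass_def)
    moreover have "0 \<le> defect_mass p b n"
      using b b_pos[of n] defect_mean_nonneg[of "1 / b n" "p n"] by (simp add: defect_mass_def)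
    moreover have "\<bar>Rfun p b n 1\<bar> \<le> L"
      using lipschitz_onD[of L "{0..1}" "Rfun p b n" 1 0] N0[OF n]
      by (simp add: Rfun_def gen_fun_def dist_real_def)
    ultimately show ?thesis using b mean K(2)[of n] by (auto simp: abs_le_iff)
  qed
  then show ?thesis using that by blast
qed

lemma mixing_laws_tight:
  fixes P :: "nat \<Rightarrow> nat pmf"
  assumes "\<And>n. integrable (P n) real" "\<And>n. 1 \<le> B n"
  shows "tight (\<lambda>n. mixing_law (P n) (B n))"
  unfolding tight_def
proof (intro conjI allI impI)
  show "real_distribution (mixing_law (P n) (B n))" for n
    using assms by (rule mixing_law_real_distribution)
  fix \<epsilon> :: real assume "0 < \<epsilon>"
  then show "\<exists>a b::real. a < b \<and> (\<forall>n. 1 - \<epsilon> < measure (mixing_law (P n) (B n)) {a<..b})"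
    using mixing_law_unit_interval[OF assms] by (intro exI[of _ "-1"] exI[of _ 1]) auto
qed

lemma bounded_tight_subsequence:
  fixes x :: "nat \<Rightarrow> 'a::heine_borel" and \<mu> :: "nat \<Rightarrow> real measure"
  assumes "bounded (range x)" "tight \<mu>"
  obtains \<sigma> l M where "strict_mono \<sigma>" "(x \<circ> \<sigma>) \<longlonglongrightarrow> l" "real_distribution M" "weak_conv_m (\<mu> \<circ> \<sigma>) M"
proof -
  obtain r l where r: "strict_mono r" "(x \<circ> r) \<longlonglongrightarrow> l"
    using bounded_imp_convergent_subsequence[OF assms(1)] by blast
  obtain r' M where "strict_mono r'" "real_distribution M" "weak_conv_m (\<mu> \<circ> r \<circ> r') M"
    using tight_imp_convergent_subsubsequence[OF assms(2) r(1)] by blast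
  moreover have "(x \<circ> (r \<circ> r')) \<longlonglongrightarrow> l"
    using LIMSEQ_subseq_LIMSEQ[OF r(2) \<open>strict_mono r'\<close>] by (simp add: o_assoc)
  ultimately show ?thesis using that[of "r \<circ> r'"] r(1) by (simp add: strict_mono_o o_assoc)
qed

text \<open>Passing to the limit in the integrated kernel approximation: if the masses converge to
  \<open>m\<^sub>0\<close> and the mixing laws converge weakly to \<open>\<mu>\<close>, the scaled defects converge to
  \<open>m\<^sub>0 \<integral> G(\<lambda>,\<cdot>) d\<mu>\<close>, because \<open>G(\<lambda>,\<cdot>)\<close> is bounded and continuous.\<close>

lemma scaled_defect_limit:
  fixes P :: "nat \<Rightarrow> nat pmf" and B s :: "nat \<Rightarrow> real"
  assumes P: "\<And>j. integrable (P j) real" and B: "\<And>j. 1 \<le> B j" "filterlim B at_top sequentially"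
    and s: "\<And>j. 0 \<le> s j" and mass: "(\<lambda>j. s j * defect_mean (P j) (1 / B j)) \<longlonglongrightarrow> m0"
    and M: "real_distribution M" and weak: "weak_conv_m (\<lambda>j. mixing_law (P j) (B j)) M"
    and lam: "0 \<le> lam"
  shows "(\<lambda>j. s j * defect_mean (P j) (lam / B j)) \<longlonglongrightarrow> m0 * (\<integral>v. ratio_kernel lam v \<partial>M)"
proof -
  define m where "m j = s j * defect_mean (P j) (1 / B j)" for j
  define I where "I j = (\<integral>v. ratio_kernel lam v \<partial>mixing_law (P j) (B j))" for j
  have I: "I \<longlonglongrightarrow> (\<integral>v. ratio_kernel lam v \<partial>M)" unfolding I_def
    using mixing_law_real_distribution[OF P B(1)] ratio_kernel_bound[OF lam]
    by (intro weak_conv_imp_integral_bdd_continuous_conv[OF _ M weak ratio_kernel_isCont[OF lam]]) auto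
  have m_lim: "m \<longlonglongrightarrow> m0" using mass by (simp add: m_def[abs_def])
  then have "Bseq m" by (intro convergent_imp_Bseq) (auto simp: convergent_def)
  then obtain K where K: "0 < K" "\<And>j. \<bar>m j\<bar> \<le> K" by (auto elim: BseqE)
  have "(\<lambda>j. s j * defect_mean (P j) (lam / B j) - m j * I j) \<longlonglongrightarrow> 0"
  proof (rule LIMSEQ_I)
    fix e :: real assume e: "0 < e"
    obtain B0 where B0: "\<And>b Q. b \<ge> B0 \<Longrightarrow> integrable (measure_pmf Q) real \<Longrightarrow>
        \<bar>defect_mean Q (lam/b) - defect_mean Q (1/b) * (\<integral>x. ratio_kernel lam x \<partial>mixing_law Q b)\<bar>
          \<le> e / (2*K) * defect_mean Q (1/b)"
      using defect_mean_kernel_approx[OF lam, of "e / (2*K)"] e K by auto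
    obtain J where J: "\<And>j. j \<ge> J \<Longrightarrow> B0 \<le> B j"
      using B(2) by (auto simp: filterlim_at_top eventually_sequentially)
    have "\<bar>s j * defect_mean (P j) (lam / B j) - m j * I j\<bar> < e" if "j \<ge> J" for j
    proof -
      have "\<bar>s j * defect_mean (P j) (lam / B j) - m j * I j\<bar>
          = s j * \<bar>defect_mean (P j) (lam / B j) - defect_mean (P j) (1 / B j) * I j\<bar>"
        using s[of j] by (simp add: m_def abs_mult right_diff_distrib[symmetric] mult.assoc)
      also have "\<dots> \<le> s j * (e / (2*K) * defect_mean (P j) (1 / B j))"
        using B0[OF J[OF that] P] s[of j] by (intro mult_left_mono) (auto simp: I_def)
      also have "\<dots> = e / (2*K) * m j" by (simp add: m_def)
      also have "\<dots> \<le> e / (2*K) * K" using K(1) K(2)[of j] e by (intro mult_left_mono) auto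
      also have "\<dots> < e" using K e by simp
      finally show ?thesis .
    qed
    then show "\<exists>J. \<forall>j\<ge>J. norm (s j * defect_mean (P j) (lam / B j) - m j * I j - 0) < e" by auto
  qed
  moreover have "(\<lambda>j. m j * I j) \<longlonglongrightarrow> m0 * (\<integral>v. ratio_kernel lam v \<partial>M)"
    using m_lim I by (rule tendsto_mult)
  ultimately show ?thesis using tendsto_add by fastforce
qed

section \<open>The limit of \<open>R_n\<close> is a kernel mixture\<close>

lemma Rfun_limit_along_subsequence:
  fixes p :: "nat \<Rightarrow> nat pmf" and b :: "nat \<Rightarrow> real" and \<rho> :: "nat \<Rightarrow> nat"
  assumes b_pos: "\<And>n. b n > 0" and lam: "0 \<le> lam" and R_lim: "(\<lambda>n. Rfun p b n lam) \<longlonglongrightarrow> R"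
    and \<rho>: "strict_mono \<rho>" and laws: "\<And>j. 1 \<le> b (\<rho> j) \<and> integrable (p (\<rho> j)) real"
    and b_\<rho>: "filterlim (\<lambda>j. b (\<rho> j)) at_top sequentially"
    and drift_lim: "(\<lambda>j. drift p (\<rho> j)) \<longlonglongrightarrow> c0" and mass_lim: "(\<lambda>j. defect_mass p b (\<rho> j)) \<longlonglongrightarrow> m0"
    and M: "real_distribution M" and weak: "weak_conv_m (\<lambda>j. mixing_law (p (\<rho> j)) (b (\<rho> j))) M"
  shows "R = c0 * lam - m0 * (\<integral>v. ratio_kernel lam v \<partial>M)"
proof -
  have "(\<lambda>j. real (\<rho> j) * b (\<rho> j) * defect_mean (p (\<rho> j)) (lam / b (\<rho> j)))
      \<longlonglongrightarrow> m0 * (\<integral>v. ratio_kernel lam v \<partial>M)"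
    using laws b_pos mass_lim M weak lam b_\<rho>
    by (intro scaled_defect_limit) (auto simp: defect_mass_def less_imp_le)
  then have "(\<lambda>j. drift p (\<rho> j) * lam - real (\<rho> j) * b (\<rho> j) * defect_mean (p (\<rho> j)) (lam / b (\<rho> j)))
      \<longlonglongrightarrow> c0 * lam - m0 * (\<integral>v. ratio_kernel lam v \<partial>M)"
    by (rule tendsto_diff[OF tendsto_mult[OF drift_lim tendsto_const]])
  moreover have "\<forall>\<^sub>F j in sequentially. drift p (\<rho> j) * lam
      - real (\<rho> j) * b (\<rho> j) * defect_mean (p (\<rho> j)) (lam / b (\<rho> j)) = Rfun p b (\<rho> j) lam"
    using b_\<rho> unfolding filterlim_at_top
    by (rule eventually_mono[OF spec[of _ lam]])
      (use Rfun_decomposition laws b_pos lam in \<open>auto simp: drift_def\<close>)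
  ultimately have "(\<lambda>j. Rfun p b (\<rho> j) lam) \<longlonglongrightarrow> c0 * lam - m0 * (\<integral>v. ratio_kernel lam v \<partial>M)"
    using tendsto_cong by fastforce
  moreover have "(\<lambda>j. Rfun p b (\<rho> j) lam) \<longlonglongrightarrow> R"
    using LIMSEQ_subseq_LIMSEQ[OF R_lim \<rho>] by (simp add: o_def)
  ultimately show ?thesis using LIMSEQ_unique by blast
qed

lemma limit_is_kernel_mixture:
  fixes p :: "nat \<Rightarrow> nat pmf" and b :: "nat \<Rightarrow> real" and R :: "real \<Rightarrow> real"
  assumes b_pos: "\<And>n. b n > 0" and b_lim: "filterlim b at_top sequentially"
    and A_lip: "\<And>a. a \<ge> 0 \<Longrightarrow> \<exists>L. \<forall>\<^sub>F n in sequentially. L-lipschitz_on {0..a} (Rfun p b n)"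
    and A_lim: "\<And>lam. lam \<ge> 0 \<Longrightarrow> (\<lambda>n. Rfun p b n lam) \<longlonglongrightarrow> R lam"
  shows "\<exists>c0 m0 M. real_distribution M \<and> 0 \<le> m0
    \<and> (\<forall>lam\<ge>0. R lam = c0 * lam - m0 * (\<integral>v. ratio_kernel lam v \<partial>M))"
proof -
  have "convergent (\<lambda>n. Rfun p b n 1)" using A_lim[of 1] by (auto simp: convergent_def)
  then obtain N0 C where bounds: "\<And>n. n \<ge> N0 \<Longrightarrow> 1 \<le> b n \<and> integrable (p n) real
      \<and> \<bar>drift p n\<bar> \<le> C \<and> 0 \<le> defect_mass p b n \<and> defect_mass p b n \<le> C"
    using condition_A_bounds[OF b_pos b_lim A_lip] by blast
  define \<tau> where "\<tau> j = j + N0" for j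
  have "norm (drift p (\<tau> j), defect_mass p b (\<tau> j)) \<le> C + C" for j
    using norm_Pair_le[of "drift p (\<tau> j)" "defect_mass p b (\<tau> j)"] bounds[of "\<tau> j"]
    by (simp add: \<tau>_def)
  then have "bounded (range (\<lambda>j. (drift p (\<tau> j), defect_mass p b (\<tau> j))))"
    unfolding bounded_iff by blast
  moreover have "tight (\<lambda>j. mixing_law (p (\<tau> j)) (b (\<tau> j)))"
    using bounds by (intro mixing_laws_tight) (auto simp: \<tau>_def)
  ultimately obtain \<sigma> l M where \<sigma>: "strict_mono \<sigma>"
    and lim: "((\<lambda>j. (drift p (\<tau> j), defect_mass p b (\<tau> j))) \<circ> \<sigma>) \<longlonglongrightarrow> l"
    and M: "real_distribution M" and weak: "weak_conv_m ((\<lambda>j. mixing_law (p (\<tau> j)) (b (\<tau> j))) \<circ> \<sigma>) M"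
    by (rule bounded_tight_subsequence)
  define \<rho> where "\<rho> = \<tau> \<circ> \<sigma>"
  have \<rho>: "strict_mono \<rho>" "\<And>j. \<rho> j \<ge> N0" using \<sigma> by (auto simp: \<rho>_def \<tau>_def strict_mono_def)
  have m0: "0 \<le> snd l"
    using tendsto_snd[OF lim] bounds \<rho>(2) by (intro LIMSEQ_le_const) (auto simp: \<rho>_def)
  have "R lam = fst l * lam - snd l * (\<integral>v. ratio_kernel lam v \<partial>M)" if lam: "0 \<le> lam" for lam
    using tendsto_fst[OF lim] tendsto_snd[OF lim] weak bounds \<rho>(2)
      filterlim_compose[OF b_lim filterlim_subseq[OF \<rho>(1)]]
    by (intro Rfun_limit_along_subsequence[OF b_pos lam A_lim[OF lam] \<rho>(1) _ _ _ _ M])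
      (auto simp: \<rho>_def o_def)
  then show ?thesis using M m0 by blast
qed

theorem lemma2p1:
  fixes p :: "nat \<Rightarrow> nat pmf" and b :: "nat \<Rightarrow> real" and R :: "real \<Rightarrow> real"
  assumes b_pos: "\<And>n. b n > 0"
    and b_lim: "filterlim b at_top sequentially"
    and A_lip: "\<And>a. a \<ge> 0 \<Longrightarrow> \<exists>L. \<forall>\<^sub>F n in sequentially. L-lipschitz_on {0..a} (Rfun p b n)"
    and A_lim: "\<And>lam. lam \<ge> 0 \<Longrightarrow> (\<lambda>n. Rfun p b n lam) \<longlonglongrightarrow> R lam"
    and A_cont: "continuous_on {0..} R"
  shows "\<exists>(c::real) (\<theta>::real) (\<Lambda>::real measure).
           \<theta> \<ge> 0 \<and> sets \<Lambda> = sets borel \<and> emeasure \<Lambda> {..0} = 0 \<and>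
           sigma_finite_measure \<Lambda> \<and>
           (\<integral>\<^sup>+ u. ennreal (min u (u^2)) \<partial>\<Lambda>) < \<infinity> \<and>
           (\<forall>lam\<ge>0. R lam = c * lam - \<theta> * lam^2
               - (\<integral>u. (exp (- lam * u) - 1 + lam * u) \<partial>\<Lambda>))"
proof -
  obtain c0 m0 M where M: "real_distribution M" and m0: "0 \<le> m0"
    and R: "\<And>lam. 0 \<le> lam \<Longrightarrow> R lam = c0 * lam - m0 * (\<integral>v. ratio_kernel lam v \<partial>M)"
    using limit_is_kernel_mixture[OF b_pos b_lim A_lip A_lim] by blast
  define \<Lambda> where "\<Lambda> = levy_measure M m0"
  have \<Lambda>: "sets \<Lambda> = sets borel" "emeasure \<Lambda> {..0} = 0" "(\<integral>\<^sup>+ u. ennreal (min u (u^2)) \<partial>\<Lambda>) < \<infinity>"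
    unfolding \<Lambda>_def using levy_measure_sets levy_measure_nonpos[OF M m0] levy_measure_moment[OF M m0]
    by auto
  have "R lam = (c0 - m0 * measure M {1..}) * lam - m0 * measure M {..0} * lam^2
      - (\<integral>u. (exp (- lam * u) - 1 + lam * u) \<partial>\<Lambda>)" if "0 \<le> lam" for lam
    using R[OF that] kernel_mixture_levy_form[OF M m0 that]
    by (simp add: \<Lambda>_def exp_defect_def algebra_simps)
  moreover have "0 \<le> m0 * measure M {..0}" using m0 by simp
  ultimately show ?thesis using \<Lambda> sigma_finite_of_moment[OF \<Lambda>] by blast
qed

end
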